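(* Let $J^\star=\min_{s\in\mathcal S}J(s;w^\star,c^\star)$ and let $s^\star$ be any search attaining this minimum. Let $\pi^\star$ be the stationary policy that selects $s^\star$ at every round. Then for every budget $B>0$, $$\frac{B-n}{J^\star}\le F_B(\pi^\star)\le F_B^\star\le \frac{B+n}{J^\star}.$$
   Context: $\mathcal G=([n],\mathcal E)$ is a finite directed acyclic graph on $[n]=\{1,\dots,n\}$. A search is a tuple $s=(s_1,\dots,s_k)$ of distinct vertices ($0\le k\le n$) such that every in-neighbor of each $s_i$ belongs to $\{s_1,\dots,s_{i-1}\}$; $\mathcal S$ denotes the set of searches. For $w\in[0,\infty)^n$, $c\in(0,\infty)^n$ and a search $s$, $J(s;w,c)=\big(\sum_{i=1}^{|s|}c_{s_i}(1-\sum_{j<i}w_{s_j})\big)/\big(\sum_{i=1}^{|s|}w_{s_i}\big)$ if the denominator is positive, and $J(s;w,c)=+\infty$ otherwise (in particular for the empty search). Sequential search-and-stop setting: random costs $C=(C_1,\dots,C_n)\in[0,1]^n$ with mutually independent components and means $c^\star=\mathbb E[C]\in(0,1]^n$; a hider vector $W\in\{0,1\}^n$ that is one-hot, with $\mathbb P(W_i=1)=w^\star_i$, where $w^\star\in[0,1]^n$, $\sum_i w^\star_i=1$, and $W$ independent of $C$. At each round $t=1,2,\dots$ an independent copy $(C_t,W_t)$ is drawn. A policy selects at the beginning of round $t$ a search $s_t$ (possibly randomly, as a function of past observations) and performs $s_t[W_t]$, where $s[W]$ is the prefix of $s$ ending at the unique arm $i\in s$ with $W_i=1$ if such an arm is in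 $s$, and $s[W]=s$ otherwise; it pays $\sum_{i\in s_t[W_t]}C_{i,t}$ and observes $W_{i,t}$ for $i\in s_t$ and $C_{i,t}$ for $i\in s_t[W_t]$. With budget $B>0$, let $B_t=B-\sum_{u=1}^t\sum_{i\in s_u[W_u]}C_{i,u}$ and $\tau_B$ the first $t$ with $B_t<0$. The expected reward is $F_B(\pi)=\mathbb E\big[\sum_{t=1}^{\tau_B-1}\sum_{i\in s_t[W_t]}W_{i,t}\big]$ and $F_B^\star$ is the supremum of $F_B(\pi)$ over all such policies, which may use full knowledge of the distribution of $(C,W)$ and of $B$. *)

theory Defs
  imports "HOL-Probability.Probability"
begin

definition searches :: "nat \<Rightarrow> (nat \<times> nat) set \<Rightarrow> nat list set" where
  "searches n E = {s. distinct s \<and> set s \<subseteq> {1..n} \<and>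
      (\<forall>k<length s. \<forall>j. (j, s ! k) \<in> E \<longrightarrow> j \<in> set (take k s))}"

definition Jfun :: "nat list \<Rightarrow> (nat \<Rightarrow> real) \<Rightarrow> (nat \<Rightarrow> real) \<Rightarrow> ereal" where
  "Jfun s w c =
     (let D = (\<Sum>i<length s. w (s ! i)) in
      if D > 0 then
        ereal ((\<Sum>i<length s. c (s ! i) * (1 - (\<Sum>j<i. w (s ! j)))) / D)
      else \<infinity>)"

definition Jstar :: "nat \<Rightarrow> (nat \<times> nat) set \<Rightarrow> (nat \<Rightarrow> real) \<Rightarrow> (nat \<Rightarrow> real) \<Rightarrow> ereal" where
  "Jstar n E w c = Min ((\<lambda>s. Jfun s w c) ` searches n E)"

definition hider_vec :: "nat \<Rightarrow> nat \<Rightarrow> real" where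
  "hider_vec h = (\<lambda>i. if i = h then 1 else 0)"

definition sprefix :: "nat list \<Rightarrow> (nat \<Rightarrow> real) \<Rightarrow> nat list" where
  "sprefix s W =
     (if \<exists>i\<in>set s. W i = 1
      then take (Suc (LEAST k. k < length s \<and> W (s ! k) = 1)) s
      else s)"

text \<open>One round's randomness: cost vector C, hider index (W = hider_vec h),
  and an independent uniform seed available to the policy.\<close>
type_synonym round = "(nat \<Rightarrow> real) \<times> nat \<times> real"

text \<open>Observation of a round: the search performed, W_i for i in s (0 elsewhere),
  C_i for i in s[W] (0 elsewhere).\<close>
type_synonym obs = "nat list \<times> (nat \<Rightarrow> real) \<times> (nat \<Rightarrow> real)"

text \<open>A policy maps past observations and the seeds revealed so far to a search.\<close>
type_synonym policy = "obs list \<Rightarrow> real list \<Rightarrow> nat list"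

definition observe :: "nat list \<Rightarrow> round \<Rightarrow> obs" where
  "observe s r = (case r of (c, h, u) \<Rightarrow>
     (s, \<lambda>i. if i \<in> set s then hider_vec h i else 0,
         \<lambda>i. if i \<in> set (sprefix s (hider_vec h)) then c i else 0))"

definition seeds :: "(nat \<Rightarrow> round) \<Rightarrow> nat \<Rightarrow> real list" where
  "seeds \<omega> t = map (\<lambda>u. snd (snd (\<omega> u))) [0..<Suc t]"

primrec obs_hist :: "policy \<Rightarrow> (nat \<Rightarrow> round) \<Rightarrow> nat \<Rightarrow> obs list" where
  "obs_hist \<pi> \<omega> 0 = []"
| "obs_hist \<pi> \<omega> (Suc t) =
     obs_hist \<pi> \<omega> t @ [observe (\<pi> (obs_hist \<pi> \<omega> t) (seeds \<omega> t)) (\<omega> t)]"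

text \<open>The search chosen at round t (rounds are numbered from 0).\<close>
definition choice :: "policy \<Rightarrow> (nat \<Rightarrow> round) \<Rightarrow> nat \<Rightarrow> nat list" where
  "choice \<pi> \<omega> t = \<pi> (obs_hist \<pi> \<omega> t) (seeds \<omega> t)"

definition round_cost :: "policy \<Rightarrow> (nat \<Rightarrow> round) \<Rightarrow> nat \<Rightarrow> real" where
  "round_cost \<pi> \<omega> t = (case \<omega> t of (c, h, u) \<Rightarrow>
     sum_list (map c (sprefix (choice \<pi> \<omega> t) (hider_vec h))))"

definition round_reward :: "policy \<Rightarrow> (nat \<Rightarrow> round) \<Rightarrow> nat \<Rightarrow> real" where
  "round_reward \<pi> \<omega> t = (case \<omega> t of (c, h, u) \<Rightarrow>
     sum_list (map (hider_vec h) (sprefix (choice \<pi> \<omega> t) (hider_vec h))))"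

definition budget_left :: "real \<Rightarrow> policy \<Rightarrow> (nat \<Rightarrow> round) \<Rightarrow> nat \<Rightarrow> real" where
  "budget_left B \<pi> \<omega> t = B - (\<Sum>u\<le>t. round_cost \<pi> \<omega> u)"

text \<open>tau_B (0-based): first round t with B_t < 0; infinity if none.\<close>
definition stop_time :: "real \<Rightarrow> policy \<Rightarrow> (nat \<Rightarrow> round) \<Rightarrow> enat" where
  "stop_time B \<pi> \<omega> =
     (if \<exists>t. budget_left B \<pi> \<omega> t < 0
      then enat (LEAST t. budget_left B \<pi> \<omega> t < 0) else \<infinity>)"

definition reward_expected :: "(nat \<Rightarrow> round) measure \<Rightarrow> real \<Rightarrow> policy \<Rightarrow> ennreal" where
  "reward_expected M B \<pi> =
     (\<integral>\<^sup>+ \<omega>. (\<Sum>t. if enat t < stop_time B \<pi> \<omega> then ennreal (round_reward \<pi> \<omega> t) else 0) \<partial>M)"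

definition round_measure :: "nat \<Rightarrow> (nat \<Rightarrow> real measure) \<Rightarrow> nat pmf \<Rightarrow> round measure" where
  "round_measure n \<mu> H =
     (PiM {1..n} \<mu>) \<Otimes>\<^sub>M (measure_pmf H \<Otimes>\<^sub>M uniform_measure lborel {0..1::real})"

definition omega_measure :: "nat \<Rightarrow> (nat \<Rightarrow> real measure) \<Rightarrow> nat pmf \<Rightarrow> (nat \<Rightarrow> round) measure" where
  "omega_measure n \<mu> H = PiM UNIV (\<lambda>_::nat. round_measure n \<mu> H)"

definition valid_policy :: "nat \<Rightarrow> (nat \<times> nat) set \<Rightarrow> (nat \<Rightarrow> round) measure \<Rightarrow> policy \<Rightarrow> bool" where
  "valid_policy n E M \<pi> \<longleftrightarrow>
     (\<forall>\<omega>\<in>space M. \<forall>t. choice \<pi> \<omega> t \<in> searches n E) \<and>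
     (\<forall>t. (\<lambda>\<omega>. choice \<pi> \<omega> t) \<in> measurable M (count_space UNIV))"

definition opt_reward :: "nat \<Rightarrow> (nat \<times> nat) set \<Rightarrow> (nat \<Rightarrow> round) measure \<Rightarrow> real \<Rightarrow> ennreal" where
  "opt_reward n E M B = (SUP \<pi> \<in> {\<pi>. valid_policy n E M \<pi>}. reward_expected M B \<pi>)"

end

theory Submission
  imports Defs
begin

text \<open>
  The search performed in a round, and the decision to perform it at all, depend only on the
  earlier rounds and on the seed of the current one; the costs and the hider of that round are
  independent of them. Hence (a Wald identity) a round played with search s earns in expectation
  the probability D(s) = find_prob s w that s finds the hider and costs in expectation the
  numerator N(s) = search_cost s w c of J(s), so the total expected reward and cost of all rounds played are weighted sums of D and N.
  Since J* D(s) \<le> N(s) for every search, the reward is at most 1/J* times the cost, and the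
  cost of the rounds played is at most B + n: the budget is overdrawn once, by a round costing at
  most n. For the optimal stationary search N = J* D, the cost paid until the budget is
  overdrawn is at least B, and only the overdrawing round's reward (at most 1 \<le> n/J*) is lost.
\<close>

section \<open>Searches and the index J\<close>

definition find_prob :: "nat list \<Rightarrow> (nat \<Rightarrow> real) \<Rightarrow> real" where
  "find_prob s w = (\<Sum>i<length s. w (s ! i))"

definition search_cost :: "nat list \<Rightarrow> (nat \<Rightarrow> real) \<Rightarrow> (nat \<Rightarrow> real) \<Rightarrow> real" where
  "search_cost s w c = (\<Sum>i<length s. c (s ! i) * (1 - (\<Sum>j<i. w (s ! j))))"

lemma Jfun_eq:
  "Jfun s w c = (if 0 < find_prob s w then ereal (search_cost s w c / find_prob s w) else \<infinity>)"
  by (simp add: Jfun_def find_prob_def search_cost_def Let_def)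

lemma sum_nth_distinct_take:
  assumes "distinct s" "k \<le> length s"
  shows "(\<Sum>j<k. w (s ! j)) = sum w (set (take k s))"
proof -
  have "(\<Sum>j<k. w (s ! j)) = sum_list (map w (take k s))"
    using assms(2) by (simp add: sum_list_sum_nth atLeast0LessThan min_absorb2)
  also have "\<dots> = sum w (set (take k s))"
    using assms(1) by (simp add: sum_list_distinct_conv_sum_set)
  finally show ?thesis .
qed

lemma searches_distinct: "s \<in> searches n E \<Longrightarrow> distinct s"
  and searches_subset: "s \<in> searches n E \<Longrightarrow> set s \<subseteq> {1..n}"
  by (simp_all add: searches_def)

lemma length_searches_le: "s \<in> searches n E \<Longrightarrow> length s \<le> n"
proof -
  assume s: "s \<in> searches n E"
  have "length s = card (set s)" using searches_distinct[OF s] by (simp add: distinct_card)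
  also have "\<dots> \<le> card {1..n}" using searches_subset[OF s] by (intro card_mono) auto
  finally show ?thesis by simp
qed

lemma finite_searches: "finite (searches n E)"
proof (rule finite_subset)
  show "searches n E \<subseteq> {s. set s \<subseteq> {1..n} \<and> length s \<le> n}"
    using searches_subset length_searches_le by blast
qed (simp add: finite_lists_length_le)

lemma Nil_in_searches: "[] \<in> searches n E"
  by (simp add: searches_def)

lemma snoc_in_searches:
  assumes "s \<in> searches n E" "v \<in> {1..n}" "v \<notin> set s" "\<And>u. (u, v) \<in> E \<Longrightarrow> u \<in> set s"
  shows "s @ [v] \<in> searches n E"
  using assms by (auto simp: searches_def nth_append less_Suc_eq)

lemma exists_complete_search:
  assumes "E \<subseteq> {1..n} \<times> {1..n}" "acyclic E"
  shows "\<exists>s\<in>searches n E. set s = {1..n}"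
proof -
  have "wf E"
    using assms by (intro finite_acyclic_wf) (auto intro: finite_subset)
  have "\<exists>s'\<in>searches n E. set s' = {1..n}" if "s \<in> searches n E" for s
    using that
  proof (induction "n - length s" arbitrary: s rule: less_induct)
    case (less s)
    show ?case
    proof (cases "set s = {1..n}")
      case False
      then have "{1..n} - set s \<noteq> {}"
        using searches_subset[OF less.prems] by auto
      \<comment> \<open>an unvisited vertex that is minimal for E has all its in-neighbours visited\<close>
      then obtain v where v: "v \<in> {1..n} - set s" and min: "\<And>u. (u, v) \<in> E \<Longrightarrow> u \<notin> {1..n} - set s"
        using \<open>wf E\<close> unfolding wf_eq_minimal by (metis ex_in_conv)
      have snoc: "s @ [v] \<in> searches n E"
        using v min assms(1) by (intro snoc_in_searches[OF less.prems]) auto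
      moreover have "n - length (s @ [v]) < n - length s"
        using length_searches_le[OF snoc] by simp
      ultimately show ?thesis using less.hyps by blast
    qed (use less.prems in blast)
  qed
  then show ?thesis using Nil_in_searches by blast
qed

locale search_instance =
  fixes n :: nat and E :: "(nat \<times> nat) set" and w c :: "nat \<Rightarrow> real"
  assumes E_subset: "E \<subseteq> {1..n} \<times> {1..n}" and acyclic_E: "acyclic E"
    and w_nonneg: "\<And>i. i \<in> {1..n} \<Longrightarrow> 0 \<le> w i" and sum_w: "(\<Sum>i\<in>{1..n}. w i) = 1"
    and c_pos: "\<And>i. i \<in> {1..n} \<Longrightarrow> 0 < c i" and c_le_1: "\<And>i. i \<in> {1..n} \<Longrightarrow> c i \<le> 1"
begin

lemma searches_nth: "s \<in> searches n E \<Longrightarrow> i < length s \<Longrightarrow> s ! i \<in> {1..n}"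
  using searches_subset nth_mem by (metis subsetD)

lemma prefix_weight_bounds:
  assumes "s \<in> searches n E" "k \<le> length s"
  shows "0 \<le> (\<Sum>j<k. w (s ! j))" "(\<Sum>j<k. w (s ! j)) \<le> 1"
proof -
  have take_subset: "set (take k s) \<subseteq> {1..n}"
    using set_take_subset searches_subset[OF assms(1)] by (rule order_trans)
  have eq: "(\<Sum>j<k. w (s ! j)) = sum w (set (take k s))"
    by (rule sum_nth_distinct_take[OF searches_distinct[OF assms(1)] assms(2)])
  show "0 \<le> (\<Sum>j<k. w (s ! j))"
    unfolding eq using take_subset w_nonneg by (intro sum_nonneg) (simp add: subset_eq)
  have "sum w (set (take k s)) \<le> sum w {1..n}"
    using take_subset w_nonneg by (intro sum_mono2) (simp_all add: subset_eq)
  then show "(\<Sum>j<k. w (s ! j)) \<le> 1" unfolding eq sum_w .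
qed

lemma search_cost_term_bounds:
  assumes "s \<in> searches n E" "i < length s"
  shows "0 \<le> c (s ! i) * (1 - (\<Sum>j<i. w (s ! j)))" "c (s ! i) * (1 - (\<Sum>j<i. w (s ! j))) \<le> 1"
proof -
  have "0 \<le> c (s ! i)" "c (s ! i) \<le> 1"
    using searches_nth[OF assms] c_pos c_le_1 less_imp_le by blast+
  moreover have "0 \<le> 1 - (\<Sum>j<i. w (s ! j))" "1 - (\<Sum>j<i. w (s ! j)) \<le> 1"
    using prefix_weight_bounds[OF assms(1), of i] assms(2) by simp_all
  ultimately show "0 \<le> c (s ! i) * (1 - (\<Sum>j<i. w (s ! j)))"
    "c (s ! i) * (1 - (\<Sum>j<i. w (s ! j))) \<le> 1"
    by (simp_all add: mult_le_one)
qed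

lemma find_prob_nonneg: "s \<in> searches n E \<Longrightarrow> 0 \<le> find_prob s w"
  using prefix_weight_bounds(1)[of s "length s"] by (simp add: find_prob_def)

lemma search_cost_nonneg: "s \<in> searches n E \<Longrightarrow> 0 \<le> search_cost s w c"
  unfolding search_cost_def using search_cost_term_bounds(1) by (intro sum_nonneg) simp

lemma search_cost_le: "s \<in> searches n E \<Longrightarrow> search_cost s w c \<le> real n"
proof -
  assume s: "s \<in> searches n E"
  have "search_cost s w c \<le> (\<Sum>i<length s. 1)"
    unfolding search_cost_def using search_cost_term_bounds(2)[OF s] by (intro sum_mono) simp
  then show ?thesis using length_searches_le[OF s] by simp
qed

lemma search_cost_pos: "s \<in> searches n E \<Longrightarrow> s \<noteq> [] \<Longrightarrow> 0 < search_cost s w c"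
proof -
  assume s: "s \<in> searches n E" and "s \<noteq> []"
  then have "{..<length s} = insert 0 {1..<length s}" by auto
  then have "search_cost s w c
      = c (s ! 0) + (\<Sum>i\<in>{1..<length s}. c (s ! i) * (1 - (\<Sum>j<i. w (s ! j))))"
    by (simp add: search_cost_def)
  moreover have "0 < c (s ! 0)" using searches_nth[OF s] \<open>s \<noteq> []\<close> c_pos by simp
  moreover have "0 \<le> (\<Sum>i\<in>{1..<length s}. c (s ! i) * (1 - (\<Sum>j<i. w (s ! j))))"
    using search_cost_term_bounds(1)[OF s] by (intro sum_nonneg) simp
  ultimately show ?thesis by linarith
qed

lemma Jfun_pos: "s \<in> searches n E \<Longrightarrow> 0 < Jfun s w c"
  using search_cost_pos[of s] by (cases "s = []") (auto simp: Jfun_eq find_prob_def)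

lemma Jstar_le_Jfun: "s \<in> searches n E \<Longrightarrow> Jstar n E w c \<le> Jfun s w c"
  unfolding Jstar_def using finite_searches by (intro Min_le) auto

definition J :: real where
  "J = real_of_ereal (Jstar n E w c)"

lemma Jstar_eq_J: "Jstar n E w c = ereal J" and J_pos: "0 < J" and J_le_n: "J \<le> real n"
proof -
  obtain s0 where s0: "s0 \<in> searches n E" "set s0 = {1..n}"
    using exists_complete_search[OF E_subset acyclic_E] by blast
  have "find_prob s0 w = 1"
    using sum_nth_distinct_take[OF searches_distinct[OF s0(1)] order_refl, of w] s0(2) sum_w
    by (simp add: find_prob_def)
  then have Jstar_le: "Jstar n E w c \<le> ereal (search_cost s0 w c)"
    using Jstar_le_Jfun[OF s0(1)] by (simp add: Jfun_eq)
  have "Jstar n E w c \<in> (\<lambda>s. Jfun s w c) ` searches n E"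
    unfolding Jstar_def using finite_searches Nil_in_searches by (intro Min_in) blast+
  then have "0 < Jstar n E w c" using Jfun_pos by auto
  with Jstar_le show "Jstar n E w c = ereal J" "0 < J"
    by (cases "Jstar n E w c"; simp add: J_def)+
  with Jstar_le show "J \<le> real n"
    using search_cost_le[OF s0(1)] by simp
qed

lemma J_mult_find_prob_le:
  assumes "s \<in> searches n E"
  shows "J * find_prob s w \<le> search_cost s w c"
proof (cases "0 < find_prob s w")
  case True
  then have "J \<le> search_cost s w c / find_prob s w"
    using Jstar_le_Jfun[OF assms] by (simp add: Jstar_eq_J Jfun_eq)
  with True show ?thesis by (simp add: field_simps)
next
  case False
  then show ?thesis
    using find_prob_nonneg[OF assms] search_cost_nonneg[OF assms] by simp
qed

lemma optimal_search:
  assumes "s \<in> searches n E" "Jfun s w c = Jstar n E w c"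
  shows "0 < find_prob s w" "search_cost s w c = J * find_prob s w"
proof -
  show pos: "0 < find_prob s w"
    using assms(2) by (auto simp: Jstar_eq_J Jfun_eq split: if_splits)
  then show "search_cost s w c = J * find_prob s w"
    using assms(2) by (simp add: Jstar_eq_J Jfun_eq field_simps)
qed

end

definition search_round_cost :: "nat list \<Rightarrow> (nat \<Rightarrow> real) \<Rightarrow> nat \<Rightarrow> real" where
  "search_round_cost s c h = sum_list (map c (sprefix s (hider_vec h)))"

definition search_round_reward :: "nat list \<Rightarrow> nat \<Rightarrow> real" where
  "search_round_reward s h = sum_list (map (hider_vec h) (sprefix s (hider_vec h)))"

lemma sprefix_Nil [simp]: "sprefix [] W = []"
  by (simp add: sprefix_def)

lemma hider_vec_apply: "hider_vec h i = (if i = h then 1 else 0)"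
  by (simp add: hider_vec_def)

lemma sprefix_hider_vec_Cons:
  "sprefix (x # xs) (hider_vec h) = (if x = h then [x] else x # sprefix xs (hider_vec h))"
proof -
  have hv: "hider_vec h i = 1 \<longleftrightarrow> i = h" for i by (simp add: hider_vec_def)
  show ?thesis
  proof (cases "x = h")
    case True
    have "(LEAST k. k < Suc (length xs) \<and> (x # xs) ! k = h) = 0"
      using True by (intro Least_eq_0) simp
    then show ?thesis using True by (simp add: sprefix_def hv)
  next
    case False
    show ?thesis
    proof (cases "h \<in> set xs")
      case True
      then obtain k where "k < length xs" "xs ! k = h" by (auto simp: in_set_conv_nth)
      then have "(LEAST k. k < Suc (length xs) \<and> (x # xs) ! k = h)
          = Suc (LEAST k. k < length xs \<and> xs ! k = h)"
        using False by (subst Least_Suc[of _ "Suc k"]) auto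
      then show ?thesis using True False by (simp add: sprefix_def hv)
    qed (use False in \<open>simp add: sprefix_def hv\<close>)
  qed
qed

lemma search_round_reward_eq: "search_round_reward s h = of_bool (h \<in> set s)"
  by (induction s) (auto simp: search_round_reward_def sprefix_hider_vec_Cons hider_vec_apply)

lemma search_round_cost_eq:
  "search_round_cost s c h = (\<Sum>i<length s. if h \<in> set (take i s) then 0 else c (s ! i))"
proof (induction s)
  case (Cons x xs)
  then show ?case
    unfolding length_Cons sum.lessThan_Suc_shift
    by (simp add: search_round_cost_def sprefix_hider_vec_Cons cong: if_cong)
qed (simp add: search_round_cost_def)

lemma search_round_cost_bounds:
  assumes s: "s \<in> searches n E" and C: "\<forall>i\<in>{1..n}. 0 \<le> C i \<and> C i \<le> 1"
  shows "0 \<le> search_round_cost s C h \<and> search_round_cost s C h \<le> real n"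
proof -
  have bounds: "0 \<le> (if h \<in> set (take i s) then 0 else C (s ! i))"
    "(if h \<in> set (take i s) then 0 else C (s ! i)) \<le> 1" if "i < length s" for i
    using C nth_mem[OF that] searches_subset[OF s] by auto
  have "search_round_cost s C h \<le> (\<Sum>i<length s. 1)"
    unfolding search_round_cost_eq using bounds(2) by (intro sum_mono) simp
  then show ?thesis
    using length_searches_le[OF s] bounds(1) by (auto simp: search_round_cost_eq intro: sum_nonneg)
qed

section \<open>Spending a budget\<close>

definition within_budget :: "real \<Rightarrow> (nat \<Rightarrow> real) \<Rightarrow> nat \<Rightarrow> bool" where
  "within_budget B x t \<longleftrightarrow> (\<forall>u<t. (\<Sum>v\<le>u. x v) \<le> B)"

lemma within_budget_Suc: "within_budget B x (Suc t) \<longleftrightarrow> within_budget B x t \<and> (\<Sum>v\<le>t. x v) \<le> B"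
  by (auto simp: within_budget_def less_Suc_eq)

lemma sum_within_budget_le:
  assumes x: "\<And>t. 0 \<le> x t \<and> x t \<le> K" and "0 \<le> B"
  shows "(\<Sum>t<N. if within_budget B x t then x t else 0) \<le> B + K"
proof -
  \<comment> \<open>before the budget is exhausted the sum is at most B, and the overshooting round adds at most K\<close>
  have "(within_budget B x N \<longrightarrow> (\<Sum>t<N. if within_budget B x t then x t else 0) = (\<Sum>t<N. x t))
      \<and> (\<Sum>t<N. if within_budget B x t then x t else 0) \<le> B + K"
  proof (induction N)
    case 0
    then show ?case using assms(2) x[of 0] by simp
  next
    case (Suc N)
    show ?case
    proof (cases "within_budget B x N")
      case True
      have "(\<Sum>t<N. x t) \<le> B"
        using True \<open>0 \<le> B\<close> by (cases N) (auto simp: within_budget_Suc lessThan_Suc_atMost)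
      then show ?thesis using Suc True x[of N] by simp
    qed (use Suc in \<open>simp add: within_budget_Suc\<close>)
  qed
  then show ?thesis ..
qed

lemma suminf_within_budget_le:
  assumes "\<And>t. 0 \<le> x t \<and> x t \<le> K" and "0 \<le> B"
  shows "(\<Sum>t. of_bool (within_budget B x t) * ennreal (x t)) \<le> ennreal (B + K)"
proof (rule suminf_le_const[OF summableI])
  fix N
  have "(\<Sum>t<N. of_bool (within_budget B x t) * ennreal (x t))
      = (\<Sum>t<N. ennreal (if within_budget B x t then x t else 0))"
    by (intro sum.cong) auto
  also have "\<dots> = ennreal (\<Sum>t<N. if within_budget B x t then x t else 0)"
    using assms(1) by (intro sum_ennreal) auto
  also have "\<dots> \<le> ennreal (B + K)"
    using sum_within_budget_le[OF assms] by (rule ennreal_leI)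
  finally show "(\<Sum>t<N. of_bool (within_budget B x t) * ennreal (x t)) \<le> ennreal (B + K)" .
qed

lemma le_suminf_within_budget:
  assumes x: "\<And>t. 0 \<le> x t" and exhausted: "\<not> within_budget B x t0"
  shows "ennreal B \<le> (\<Sum>t. of_bool (within_budget B x t) * ennreal (x t))"
proof -
  define L where "L = (LEAST u. B < (\<Sum>v\<le>u. x v))"
  have "\<exists>u. B < (\<Sum>v\<le>u. x v)" using exhausted by (auto simp: within_budget_def not_le)
  then have L: "B < (\<Sum>v\<le>L. x v)" unfolding L_def by (rule LeastI_ex)
  have within: "within_budget B x t" if "t \<le> L" for t
    using that not_less_Least[of _ "\<lambda>u. B < (\<Sum>v\<le>u. x v)"]
    by (auto simp: within_budget_def L_def not_less)
  have "ennreal B \<le> ennreal (\<Sum>t\<le>L. x t)" using L by (intro ennreal_leI) simp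
  also have "\<dots> = (\<Sum>t\<le>L. of_bool (within_budget B x t) * ennreal (x t))"
    using x within by (subst sum_ennreal[symmetric]) auto
  also have "\<dots> \<le> (\<Sum>t. of_bool (within_budget B x t) * ennreal (x t))"
    by (rule sum_le_suminf) auto
  finally show ?thesis .
qed

lemma suminf_of_bool_all_less_le:
  assumes "\<And>t. r t \<le> (1::ennreal)"
  shows "(\<Sum>t. of_bool (\<forall>u<t. P u) * r t) \<le> (\<Sum>t. of_bool (\<forall>u\<le>t. P u) * r t) + 1"
proof -
  define L where "L = (LEAST u. \<not> P u)"
  \<comment> \<open>the two indicators differ only at the first failure of P\<close>
  have "of_bool (\<forall>u<t. P u) * r t \<le> of_bool (\<forall>u\<le>t. P u) * r t + of_bool (t = L)" for t
  proof (cases "(\<forall>u<t. P u) \<and> \<not> P t")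
    case True
    then have "t = L" unfolding L_def
      by (metis (mono_tags) Least_le LeastI linorder_neqE_nat not_le)
    then show ?thesis using assms[of t] True by simp
  qed (auto simp: le_less)
  then have "(\<Sum>t. of_bool (\<forall>u<t. P u) * r t) \<le> (\<Sum>t. of_bool (\<forall>u\<le>t. P u) * r t + of_bool (t = L))"
    by (intro suminf_le summableI)
  also have "\<dots> = (\<Sum>t. of_bool (\<forall>u\<le>t. P u) * r t) + (\<Sum>t. of_bool (t = L))"
    by (rule suminf_add[symmetric]) auto
  also have "(\<Sum>t. of_bool (t = L) :: ennreal) = 1"
    using sums_single[of L "\<lambda>_. 1 :: ennreal"] by (simp add: sums_iff of_bool_def)
  finally show ?thesis .
qed

section \<open>Resampling one round of an independent sequence\<close>

lemma nn_integral_pair_pair_last: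
  assumes "sigma_finite_measure A" "sigma_finite_measure B" "sigma_finite_measure C"
    and f[measurable]: "f \<in> borel_measurable (C \<Otimes>\<^sub>M (A \<Otimes>\<^sub>M B))"
  shows "(\<integral>\<^sup>+x. f (snd (snd x), fst x, fst (snd x)) \<partial>(A \<Otimes>\<^sub>M (B \<Otimes>\<^sub>M C)))
       = (\<integral>\<^sup>+z. \<integral>\<^sup>+y. f (z, y) \<partial>(A \<Otimes>\<^sub>M B) \<partial>C)"
proof -
  interpret A: sigma_finite_measure A by fact
  interpret B: sigma_finite_measure B by fact
  interpret C: sigma_finite_measure C by fact
  interpret BC: pair_sigma_finite B C ..
  interpret AC: pair_sigma_finite A C ..
  have "(\<integral>\<^sup>+x. f (snd (snd x), fst x, fst (snd x)) \<partial>(A \<Otimes>\<^sub>M (B \<Otimes>\<^sub>M C)))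
      = (\<integral>\<^sup>+x. \<integral>\<^sup>+p. f (snd p, x, fst p) \<partial>(B \<Otimes>\<^sub>M C) \<partial>A)"
  proof -
    have "(\<lambda>x. f (snd (snd x), fst x, fst (snd x))) \<in> borel_measurable (A \<Otimes>\<^sub>M (B \<Otimes>\<^sub>M C))"
      by measurable
    from BC.nn_integral_fst[OF this] show ?thesis by simp
  qed
  also have "\<dots> = (\<integral>\<^sup>+x. \<integral>\<^sup>+y. \<integral>\<^sup>+z. f (z, x, y) \<partial>C \<partial>B \<partial>A)"
  proof (rule nn_integral_cong)
    fix x assume "x \<in> space A"
    then have "(\<lambda>p. f (snd p, x, fst p)) \<in> borel_measurable (B \<Otimes>\<^sub>M C)" by measurable
    from C.nn_integral_fst[OF this] show "integral\<^sup>N (B \<Otimes>\<^sub>M C) (\<lambda>p. f (snd p, x, fst p))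
        = (\<integral>\<^sup>+y. \<integral>\<^sup>+z. f (z, x, y) \<partial>C \<partial>B)" by simp
  qed
  also have "\<dots> = (\<integral>\<^sup>+x. \<integral>\<^sup>+z. \<integral>\<^sup>+y. f (z, x, y) \<partial>B \<partial>C \<partial>A)"
    by (intro nn_integral_cong BC.Fubini'[symmetric]) measurable
  also have "\<dots> = (\<integral>\<^sup>+z. \<integral>\<^sup>+x. \<integral>\<^sup>+y. f (z, x, y) \<partial>B \<partial>A \<partial>C)"
    by (rule AC.Fubini'[symmetric]) measurable
  also have "\<dots> = (\<integral>\<^sup>+z. \<integral>\<^sup>+y. f (z, y) \<partial>(A \<Otimes>\<^sub>M B) \<partial>C)"
    by (intro nn_integral_cong B.nn_integral_fst) measurable
  finally show ?thesis .
qed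

lemma nn_integral_round_factor:
  fixes g :: "'l::countable \<Rightarrow> 'c \<times> 'h \<Rightarrow> ennreal"
  assumes C: "prob_space C" and Hm: "prob_space Hm" and U: "prob_space U"
    and a[measurable]: "a \<in> borel_measurable U" and b[measurable]: "b \<in> measurable U (count_space UNIV)"
    and g[measurable]: "\<And>s. g s \<in> borel_measurable (C \<Otimes>\<^sub>M Hm)"
  shows "(\<integral>\<^sup>+x. a (snd (snd x)) * g (b (snd (snd x))) (fst x, fst (snd x)) \<partial>(C \<Otimes>\<^sub>M (Hm \<Otimes>\<^sub>M U)))
       = (\<integral>\<^sup>+x. a (snd (snd x)) * integral\<^sup>N (C \<Otimes>\<^sub>M Hm) (g (b (snd (snd x)))) \<partial>(C \<Otimes>\<^sub>M (Hm \<Otimes>\<^sub>M U)))"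
proof -
  interpret C: prob_space C by fact
  interpret Hm: prob_space Hm by fact
  interpret U: prob_space U by fact
  interpret CH: prob_space "C \<Otimes>\<^sub>M Hm" by (intro prob_space_pair C Hm)
  define G where "G s = integral\<^sup>N (C \<Otimes>\<^sub>M Hm) (g s)" for s
  have G_b[measurable]: "(\<lambda>u. G (b u)) \<in> borel_measurable U"
    by (rule measurable_compose_countable[OF _ b]) simp
  have g_b: "(\<lambda>p. g (b (fst p)) (snd p)) \<in> borel_measurable (U \<Otimes>\<^sub>M (C \<Otimes>\<^sub>M Hm))"
    by (rule measurable_compose_countable[where f="\<lambda>s p. g s (snd p)"]) measurable
  note last = nn_integral_pair_pair_last[OF C.sigma_finite_measure_axioms
      Hm.sigma_finite_measure_axioms U.sigma_finite_measure_axioms]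
  have "(\<integral>\<^sup>+x. a (snd (snd x)) * g (b (snd (snd x))) (fst x, fst (snd x)) \<partial>(C \<Otimes>\<^sub>M (Hm \<Otimes>\<^sub>M U)))
      = (\<integral>\<^sup>+u. \<integral>\<^sup>+y. a u * g (b u) y \<partial>(C \<Otimes>\<^sub>M Hm) \<partial>U)"
    using last[of "\<lambda>p. a (fst p) * g (b (fst p)) (snd p)"] g_b by simp
  also have "\<dots> = (\<integral>\<^sup>+u. \<integral>\<^sup>+y. a u * G (b u) \<partial>(C \<Otimes>\<^sub>M Hm) \<partial>U)"
    by (rule nn_integral_cong) (simp add: nn_integral_cmult g G_def CH.emeasure_space_1)
  also have "\<dots> = (\<integral>\<^sup>+x. a (snd (snd x)) * G (b (snd (snd x))) \<partial>(C \<Otimes>\<^sub>M (Hm \<Otimes>\<^sub>M U)))"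
    using last[of "\<lambda>p. a (fst p) * G (b (fst p))"] by simp
  finally show ?thesis unfolding G_def .
qed

lemma nn_integral_PiM_resample:
  fixes t :: 'i
  assumes "prob_space R" and F: "F \<in> borel_measurable (PiM UNIV (\<lambda>_::'i. R))"
  shows "integral\<^sup>N (PiM UNIV (\<lambda>_. R)) F = (\<integral>\<^sup>+om. \<integral>\<^sup>+x. F (om(t := x)) \<partial>R \<partial>PiM UNIV (\<lambda>_. R))"
proof -
  define M where "M = PiM UNIV (\<lambda>_::'i. R)"
  interpret R: prob_space R by fact
  interpret M: prob_space M unfolding M_def by (intro prob_space_PiM R.prob_space_axioms)
  interpret RM: pair_sigma_finite R M ..
  have upd: "(\<lambda>(x, om). om(t := x)) \<in> measurable (R \<Otimes>\<^sub>M M) M"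
    using measurable_fun_upd[where J=UNIV and I=UNIV and i=t and N="R \<Otimes>\<^sub>M M" and f=snd and h=fst]
    by (simp add: M_def split_beta')
  have "distr (R \<Otimes>\<^sub>M M) M (\<lambda>(x, om). om(t := x)) = M"
    using distr_pair_PiM_eq_PiM[of UNIV "\<lambda>_. R" t] R.prob_space_axioms by (simp add: M_def)
  then have "integral\<^sup>N M F = (\<integral>\<^sup>+p. F (case p of (x, om) \<Rightarrow> om(t := x)) \<partial>(R \<Otimes>\<^sub>M M))"
    using nn_integral_distr[OF upd] F by (metis (no_types) M_def)
  also have "\<dots> = (\<integral>\<^sup>+om. \<integral>\<^sup>+x. F (om(t := x)) \<partial>R \<partial>M)"
    using RM.nn_integral_snd[OF measurable_compose[OF upd]] F by (simp add: M_def)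
  finally show ?thesis unfolding M_def .
qed

lemma nn_integral_PiM_fresh_round:
  fixes C :: "'c measure" and Hm :: "'h measure" and U :: "'u measure"
    and g :: "'l::countable \<Rightarrow> 'c \<times> 'h \<Rightarrow> ennreal" and t :: 'i
  defines "M \<equiv> PiM UNIV (\<lambda>_::'i. C \<Otimes>\<^sub>M (Hm \<Otimes>\<^sub>M U))"
  assumes C: "prob_space C" and Hm: "prob_space Hm" and U: "prob_space U"
    and \<phi>[measurable]: "\<phi> \<in> borel_measurable M" and \<sigma>[measurable]: "\<sigma> \<in> measurable M (count_space UNIV)"
    and g: "\<And>s. g s \<in> borel_measurable (C \<Otimes>\<^sub>M Hm)"
    and \<phi>_fresh: "\<And>om c h c' h' u. \<phi> (om(t := (c, h, u))) = \<phi> (om(t := (c', h', u)))"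
    and \<sigma>_fresh: "\<And>om c h c' h' u. \<sigma> (om(t := (c, h, u))) = \<sigma> (om(t := (c', h', u)))"
  shows "(\<integral>\<^sup>+om. \<phi> om * g (\<sigma> om) (fst (om t), fst (snd (om t))) \<partial>M)
       = (\<integral>\<^sup>+om. \<phi> om * integral\<^sup>N (C \<Otimes>\<^sub>M Hm) (g (\<sigma> om)) \<partial>M)"
proof -
  have R: "prob_space (C \<Otimes>\<^sub>M (Hm \<Otimes>\<^sub>M U))" by (intro prob_space_pair C Hm U)
  obtain c0 h0 where c0: "c0 \<in> space C" and h0: "h0 \<in> space Hm"
    using prob_space.not_empty[OF C] prob_space.not_empty[OF Hm] by blast
  have inner: "(\<integral>\<^sup>+x. \<phi> (om(t := x)) * g (\<sigma> (om(t := x))) (fst x, fst (snd x)) \<partial>(C \<Otimes>\<^sub>M (Hm \<Otimes>\<^sub>M U)))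
      = (\<integral>\<^sup>+x. \<phi> (om(t := x)) * integral\<^sup>N (C \<Otimes>\<^sub>M Hm) (g (\<sigma> (om(t := x)))) \<partial>(C \<Otimes>\<^sub>M (Hm \<Otimes>\<^sub>M U)))"
    if om: "om \<in> space M" for om
  proof -
    define fresh where "fresh u = om(t := (c0, h0, u))" for u
    have fresh[measurable]: "fresh \<in> measurable U M"
      unfolding fresh_def M_def using om c0 h0 by (intro measurable_fun_upd[where J=UNIV]) (auto simp: M_def)
    have "\<phi> (om(t := x)) = \<phi> (fresh (snd (snd x)))" "\<sigma> (om(t := x)) = \<sigma> (fresh (snd (snd x)))" for x
      using \<phi>_fresh[of om "fst x" "fst (snd x)" "snd (snd x)" c0 h0]
        \<sigma>_fresh[of om "fst x" "fst (snd x)" "snd (snd x)" c0 h0]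
      by (simp_all add: fresh_def)
    then show ?thesis
      by (simp only:) (rule nn_integral_round_factor[OF C Hm U _ _ g]; measurable)
  qed
  have round: "(\<lambda>om. (fst (om t), fst (snd (om t)))) \<in> measurable M (C \<Otimes>\<^sub>M Hm)"
    unfolding M_def by measurable
  have "(\<lambda>om. g (\<sigma> om) (fst (om t), fst (snd (om t)))) \<in> borel_measurable M"
    by (rule measurable_compose_countable[OF _ \<sigma>], rule measurable_compose[OF round g])
  then have lhs: "(\<lambda>om. \<phi> om * g (\<sigma> om) (fst (om t), fst (snd (om t)))) \<in> borel_measurable M"
    by measurable
  have "(\<lambda>om. integral\<^sup>N (C \<Otimes>\<^sub>M Hm) (g (\<sigma> om))) \<in> borel_measurable M"
    by (rule measurable_compose_countable[OF _ \<sigma>]) simp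
  then have rhs: "(\<lambda>om. \<phi> om * integral\<^sup>N (C \<Otimes>\<^sub>M Hm) (g (\<sigma> om))) \<in> borel_measurable M"
    by measurable
  note resample = nn_integral_PiM_resample[OF R, of _ t, folded M_def]
  show ?thesis
    unfolding resample[OF lhs] resample[OF rhs] by (rule nn_integral_cong) (simp add: inner)
qed

lemma obs_hist_cong: "(\<And>u. u < t \<Longrightarrow> om u = om' u) \<Longrightarrow> obs_hist p om t = obs_hist p om' t"
proof (induction t)
  case (Suc t)
  have "seeds om t = seeds om' t"
    using Suc.prems by (auto simp: seeds_def)
  then show ?case using Suc by simp
qed simp

lemma choice_cong:
  assumes "\<And>u. u < t \<Longrightarrow> om u = om' u" "snd (snd (om t)) = snd (snd (om' t))"
  shows "choice p om t = choice p om' t"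
proof -
  have "seeds om t = seeds om' t"
    using assms by (auto simp: seeds_def less_Suc_eq)
  then show ?thesis
    using obs_hist_cong[of t om om' p, OF assms(1)] by (simp add: choice_def)
qed

lemma round_cost_eq: "round_cost p om t = search_round_cost (choice p om t) (fst (om t)) (fst (snd (om t)))"
  by (simp add: round_cost_def search_round_cost_def split: prod.split)

lemma round_reward_eq: "round_reward p om t = search_round_reward (choice p om t) (fst (snd (om t)))"
  by (simp add: round_reward_def search_round_reward_def split: prod.split)

abbreviation running :: "real \<Rightarrow> policy \<Rightarrow> (nat \<Rightarrow> round) \<Rightarrow> nat \<Rightarrow> bool" where
  "running B p om t \<equiv> within_budget B (round_cost p om) t"

lemma within_budget_round_cost_cong:
  assumes "\<And>u. u < t \<Longrightarrow> om u = om' u"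
  shows "running B p om t = running B p om' t"
proof -
  have "round_cost p om u = round_cost p om' u" if "u < t" for u
    using that assms choice_cong[of u om om' p] by (simp add: round_cost_eq)
  then show ?thesis
    unfolding within_budget_def by (intro all_cong imp_cong refl arg_cong2[where f="(\<le>)"] sum.cong) auto
qed

lemma stop_time_gt_iff: "enat t < stop_time B p om \<longleftrightarrow> running B p om (Suc t)"
proof (cases "\<exists>u. budget_left B p om u < 0")
  case True
  let ?L = "LEAST u. budget_left B p om u < 0"
  have "budget_left B p om ?L < 0" using True by (rule LeastI_ex)
  then have "t < ?L \<longleftrightarrow> (\<forall>u\<le>t. 0 \<le> budget_left B p om u)"
    using not_less_Least[of _ "\<lambda>u. budget_left B p om u < 0"]
    by (meson le_less_trans linorder_not_le)
  then show ?thesis using True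
    by (simp add: stop_time_def within_budget_def budget_left_def less_Suc_eq_le)
next
  case False
  then show ?thesis
    by (auto simp: stop_time_def within_budget_def budget_left_def not_less dest: leD)
qed

section \<open>Expected rewards and costs\<close>

locale search_and_stop = search_instance +
  fixes \<mu> :: "nat \<Rightarrow> real measure" and H :: "nat pmf"
  assumes pmf_H: "\<And>i. i \<in> {1..n} \<Longrightarrow> pmf H i = w i"
    and prob_space_\<mu>: "\<And>i. i \<in> {1..n} \<Longrightarrow> prob_space (\<mu> i)"
    and sets_\<mu>: "\<And>i. i \<in> {1..n} \<Longrightarrow> sets (\<mu> i) = sets borel"
    and \<mu>_unit_interval: "\<And>i. i \<in> {1..n} \<Longrightarrow> emeasure (\<mu> i) {0..1} = 1"
    and mean_\<mu>: "\<And>i. i \<in> {1..n} \<Longrightarrow> (\<integral>x. x \<partial>\<mu> i) = c i"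
begin

abbreviation "Cm \<equiv> PiM {1..n} \<mu>"
abbreviation "Hm \<equiv> measure_pmf H"
abbreviation "Um \<equiv> uniform_measure lborel {0..1::real}"
abbreviation "\<Omega> \<equiv> omega_measure n \<mu> H"

lemma prob_space_Cm: "prob_space Cm"
  by (intro prob_space_PiM prob_space_\<mu>)

lemma prob_space_Um: "prob_space Um"
  by (intro prob_space_uniform_measure) auto

lemma prob_space_round: "prob_space (Cm \<Otimes>\<^sub>M (Hm \<Otimes>\<^sub>M Um))"
  by (intro prob_space_pair prob_space_Cm prob_space_measure_pmf prob_space_Um)

lemma \<Omega>_eq: "\<Omega> = PiM UNIV (\<lambda>_::nat. Cm \<Otimes>\<^sub>M (Hm \<Otimes>\<^sub>M Um))"
  unfolding omega_measure_def round_measure_def ..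

lemma prob_space_\<Omega>: "prob_space \<Omega>"
  unfolding \<Omega>_eq by (intro prob_space_PiM prob_space_round)

lemma AE_\<mu>_unit_interval: "i \<in> {1..n} \<Longrightarrow> AE x in \<mu> i. 0 \<le> x \<and> x \<le> 1"
proof -
  assume i: "i \<in> {1..n}"
  interpret \<mu>: prob_space "\<mu> i" using prob_space_\<mu>[OF i] .
  have "\<mu>.prob {0..1} = 1" using \<mu>_unit_interval[OF i] by (simp add: \<mu>.emeasure_eq_measure)
  then have "AE x in \<mu> i. x \<in> {0..1}" by (rule \<mu>.AE_prob_1)
  then show ?thesis by auto
qed

lemma AE_Cm_unit_interval: "AE C in Cm. \<forall>i\<in>{1..n}. 0 \<le> C i \<and> C i \<le> 1"
  using AE_\<mu>_unit_interval
  by (intro eventually_ball_finite ballI AE_PiM_component[OF prob_space_\<mu>]) auto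

lemma measurable_component_Cm [measurable]: "(\<lambda>C. C i) \<in> borel_measurable Cm"
proof (cases "i \<in> {1..n}")
  case True
  then show ?thesis
    using measurable_component_singleton[of i "{1..n}" \<mu>] sets_\<mu>[OF True]
    by (simp cong: measurable_cong_sets)
next
  case False
  \<comment> \<open>outside the index set every point of the product space is undefined\<close>
  then have "(\<lambda>C. C i) \<in> borel_measurable Cm \<longleftrightarrow> (\<lambda>C. undefined :: real) \<in> borel_measurable Cm"
    by (intro measurable_cong) (auto simp: space_PiM PiE_def extensional_def)
  then show ?thesis by simp
qed

lemma nn_integral_component_Cm: "i \<in> {1..n} \<Longrightarrow> (\<integral>\<^sup>+C. ennreal (C i) \<partial>Cm) = ennreal (c i)"
proof -
  assume i: "i \<in> {1..n}"
  interpret \<mu>: prob_space "\<mu> i" using prob_space_\<mu>[OF i] .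
  have "(\<integral>\<^sup>+C. ennreal (C i) \<partial>Cm) = (\<integral>\<^sup>+x. ennreal x \<partial>distr Cm (\<mu> i) (\<lambda>C. C i))"
    using i sets_\<mu>[OF i]
    by (intro nn_integral_distr[symmetric] measurable_component_singleton)
       (auto cong: measurable_cong_sets)
  also have "\<dots> = (\<integral>\<^sup>+x. ennreal x \<partial>\<mu> i)"
    using distr_PiM_component[of "{1..n}" \<mu> i] prob_space_\<mu> i by simp
  also have "\<dots> = ennreal (\<integral>x. x \<partial>\<mu> i)"
  proof (rule nn_integral_eq_integral)
    show "integrable (\<mu> i) (\<lambda>x. x)"
      using not_integrable_integral_eq[of "\<mu> i" "\<lambda>x. x"] mean_\<mu>[OF i] c_pos[OF i] by auto
    show "AE x in \<mu> i. 0 \<le> x" using AE_\<mu>_unit_interval[OF i] by auto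
  qed
  finally show ?thesis using mean_\<mu>[OF i] by simp
qed

lemma search_round_cost_measurable [measurable]:
  "(\<lambda>x. search_round_cost s (fst x) (snd x)) \<in> borel_measurable (Cm \<Otimes>\<^sub>M Hm)"
  unfolding search_round_cost_eq by measurable

lemma search_round_reward_measurable [measurable]:
  "(\<lambda>x. search_round_reward s (snd x)) \<in> borel_measurable (Cm \<Otimes>\<^sub>M Hm)"
  unfolding search_round_reward_eq by measurable

lemma measure_Hm_set_take:
  assumes "s \<in> searches n E" "k \<le> length s"
  shows "measure Hm (set (take k s)) = (\<Sum>j<k. w (s ! j))"
proof -
  have "set (take k s) \<subseteq> {1..n}"
    using set_take_subset searches_subset[OF assms(1)] by (rule order_trans)
  then have "measure Hm (set (take k s)) = sum w (set (take k s))"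
    using pmf_H by (simp add: measure_measure_pmf_finite subset_eq)
  also have "\<dots> = (\<Sum>j<k. w (s ! j))"
    by (rule sum_nth_distinct_take[OF searches_distinct[OF assms(1)] assms(2), symmetric])
  finally show ?thesis .
qed

lemma nn_integral_search_round_reward:
  assumes "s \<in> searches n E"
  shows "integral\<^sup>N (Cm \<Otimes>\<^sub>M Hm) (\<lambda>x. ennreal (search_round_reward s (snd x))) = ennreal (find_prob s w)"
proof -
  interpret Cm: prob_space Cm by (rule prob_space_Cm)
  have "integral\<^sup>N (Cm \<Otimes>\<^sub>M Hm) (\<lambda>x. ennreal (search_round_reward s (snd x)))
      = (\<integral>\<^sup>+C. \<integral>\<^sup>+h. ennreal (search_round_reward s h) \<partial>Hm \<partial>Cm)"
  proof -
    have "(\<lambda>x. ennreal (search_round_reward s (snd x))) \<in> borel_measurable (Cm \<Otimes>\<^sub>M Hm)"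
      by measurable
    from measure_pmf.nn_integral_fst[OF this] show ?thesis by simp
  qed
  also have "\<dots> = (\<integral>\<^sup>+C. emeasure Hm (set s) \<partial>Cm)"
  proof -
    have "(\<lambda>h. ennreal (search_round_reward s h)) = indicator (set s)"
      by (auto simp: search_round_reward_eq indicator_def)
    then show ?thesis by simp
  qed
  also have "\<dots> = ennreal (measure Hm (set (take (length s) s)))"
    by (simp only: nn_integral_const Cm.emeasure_space_1 mult_1_right take_all[OF order_refl]
        measure_pmf.emeasure_eq_measure)
  also have "\<dots> = ennreal (find_prob s w)"
    by (simp only: measure_Hm_set_take[OF assms order_refl] find_prob_def)
  finally show ?thesis .
qed

lemma emeasure_Hm_not_in_prefix:
  assumes "s \<in> searches n E" "i \<le> length s"
  shows "emeasure Hm (- set (take i s)) = ennreal (1 - (\<Sum>j<i. w (s ! j)))"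
  using measure_Hm_set_take[OF assms] measure_pmf.prob_compl[of "set (take i s)" H]
  by (simp add: measure_pmf.emeasure_eq_measure Compl_eq_Diff_UNIV)

lemma nn_integral_Hm_search_round_cost:
  assumes s: "s \<in> searches n E" and C: "\<forall>i\<in>{1..n}. 0 \<le> C i \<and> C i \<le> 1"
  shows "(\<integral>\<^sup>+h. ennreal (search_round_cost s C h) \<partial>Hm)
       = (\<Sum>i<length s. ennreal (C (s ! i)) * ennreal (1 - (\<Sum>j<i. w (s ! j))))"
proof -
  have C_nonneg: "0 \<le> C (s ! i)" if "i < length s" for i
    using C searches_nth[OF s that] by blast
  have pointwise: "ennreal (search_round_cost s C h)
      = (\<Sum>i<length s. ennreal (C (s ! i)) * indicator (- set (take i s)) h)" for h
  proof -
    have "ennreal (search_round_cost s C h)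
        = (\<Sum>i<length s. ennreal (if h \<in> set (take i s) then 0 else C (s ! i)))"
      unfolding search_round_cost_eq by (rule sum_ennreal[symmetric]) (simp add: C_nonneg)
    also have "\<dots> = (\<Sum>i<length s. ennreal (C (s ! i)) * indicator (- set (take i s)) h)"
      by (intro sum.cong) (auto simp: indicator_def)
    finally show ?thesis .
  qed
  have "(\<integral>\<^sup>+h. ennreal (search_round_cost s C h) \<partial>Hm)
      = (\<Sum>i<length s. \<integral>\<^sup>+h. ennreal (C (s ! i)) * indicator (- set (take i s)) h \<partial>Hm)"
    unfolding pointwise by (rule nn_integral_sum) simp
  also have "\<dots> = (\<Sum>i<length s. ennreal (C (s ! i)) * ennreal (1 - (\<Sum>j<i. w (s ! j))))"
    using emeasure_Hm_not_in_prefix[OF s]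
    by (intro sum.cong refl) (simp add: nn_integral_cmult_indicator)
  finally show ?thesis .
qed

lemma nn_integral_search_round_cost:
  assumes s: "s \<in> searches n E"
  shows "integral\<^sup>N (Cm \<Otimes>\<^sub>M Hm) (\<lambda>x. ennreal (search_round_cost s (fst x) (snd x))) = ennreal (search_cost s w c)"
proof -
  define q where "q i = 1 - (\<Sum>j<i. w (s ! j))" for i
  have q_nonneg: "0 \<le> q i" if "i < length s" for i
    using prefix_weight_bounds(2)[OF s, of i] that by (simp add: q_def)
  have "integral\<^sup>N (Cm \<Otimes>\<^sub>M Hm) (\<lambda>x. ennreal (search_round_cost s (fst x) (snd x)))
      = (\<integral>\<^sup>+C. \<integral>\<^sup>+h. ennreal (search_round_cost s C h) \<partial>Hm \<partial>Cm)"
  proof -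
    have "(\<lambda>x. ennreal (search_round_cost s (fst x) (snd x))) \<in> borel_measurable (Cm \<Otimes>\<^sub>M Hm)"
      by measurable
    from measure_pmf.nn_integral_fst[OF this] show ?thesis by simp
  qed
  also have "\<dots> = (\<integral>\<^sup>+C. (\<Sum>i<length s. ennreal (C (s ! i)) * ennreal (q i)) \<partial>Cm)"
    using AE_Cm_unit_interval
    by (rule nn_integral_cong_AE[OF AE_mp]) (simp add: nn_integral_Hm_search_round_cost[OF s] q_def)
  also have "\<dots> = (\<Sum>i<length s. (\<integral>\<^sup>+C. ennreal (C (s ! i)) \<partial>Cm) * ennreal (q i))"
  proof -
    have "(\<lambda>C. ennreal (C i)) \<in> borel_measurable Cm" for i by measurable
    then show ?thesis by (simp add: nn_integral_sum nn_integral_multc)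
  qed
  also have "\<dots> = (\<Sum>i<length s. ennreal (c (s ! i) * q i))"
  proof (intro sum.cong refl)
    fix i assume "i \<in> {..<length s}"
    then have i: "s ! i \<in> {1..n}" "0 \<le> q i" using searches_nth[OF s] q_nonneg by auto
    then show "(\<integral>\<^sup>+C. ennreal (C (s ! i)) \<partial>Cm) * ennreal (q i) = ennreal (c (s ! i) * q i)"
      using c_pos[OF i(1)] by (simp only: nn_integral_component_Cm[OF i(1)]) (simp add: ennreal_mult)
  qed
  also have "\<dots> = ennreal (search_cost s w c)"
    using searches_nth[OF s] c_pos q_nonneg
    by (subst sum_ennreal) (auto simp: search_cost_def q_def less_imp_le)
  finally show ?thesis .
qed

lemma round_projection_measurable:
  "(\<lambda>om. (fst (om t), fst (snd (om t)))) \<in> measurable \<Omega> (Cm \<Otimes>\<^sub>M Hm)"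
  unfolding \<Omega>_eq by measurable

lemma valid_policy_choice_measurable:
  "valid_policy n E \<Omega> p \<Longrightarrow> (\<lambda>om. choice p om t) \<in> measurable \<Omega> (count_space UNIV)"
  by (simp add: valid_policy_def)

lemma round_cost_measurable:
  assumes "valid_policy n E \<Omega> p"
  shows "(\<lambda>om. round_cost p om t) \<in> borel_measurable \<Omega>"
  unfolding round_cost_eq
proof (rule measurable_compose_countable[OF _ valid_policy_choice_measurable[OF assms]])
  fix s
  show "(\<lambda>om. search_round_cost s (fst (om t)) (fst (snd (om t)))) \<in> borel_measurable \<Omega>"
    using measurable_compose[OF round_projection_measurable search_round_cost_measurable[of s]]
    by (simp only: fst_conv snd_conv)
qed

lemma round_reward_measurable:
  assumes "valid_policy n E \<Omega> p"
  shows "(\<lambda>om. round_reward p om t) \<in> borel_measurable \<Omega>"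
  unfolding round_reward_eq
proof (rule measurable_compose_countable[OF _ valid_policy_choice_measurable[OF assms]])
  fix s
  show "(\<lambda>om. search_round_reward s (fst (snd (om t)))) \<in> borel_measurable \<Omega>"
    using measurable_compose[OF round_projection_measurable search_round_reward_measurable[of s]]
    by (simp only: snd_conv)
qed

lemma running_measurable:
  assumes "valid_policy n E \<Omega> p"
  shows "Measurable.pred \<Omega> (\<lambda>om. running B p om t)"
proof -
  have "(\<lambda>om. \<Sum>v\<le>u. round_cost p om v) \<in> borel_measurable \<Omega>" for u
    by (intro borel_measurable_sum round_cost_measurable[OF assms])
  then have "Measurable.pred \<Omega> (\<lambda>om. u < t \<longrightarrow> (\<Sum>v\<le>u. round_cost p om v) \<le> B)" for u
    by measurable
  then show ?thesis
    unfolding within_budget_def by (rule pred_intros_countable)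
qed

lemma nn_integral_running_round:
  assumes p: "valid_policy n E \<Omega> p" and g: "\<And>s. g s \<in> borel_measurable (Cm \<Otimes>\<^sub>M Hm)"
  shows "(\<integral>\<^sup>+om. of_bool (running B p om t) * g (choice p om t) (fst (om t), fst (snd (om t))) \<partial>\<Omega>)
       = (\<integral>\<^sup>+om. of_bool (running B p om t) * integral\<^sup>N (Cm \<Otimes>\<^sub>M Hm) (g (choice p om t)) \<partial>\<Omega>)"
  unfolding \<Omega>_eq
proof (rule nn_integral_PiM_fresh_round[OF prob_space_Cm prob_space_measure_pmf prob_space_Um _ _ g])
  show "(\<lambda>om. of_bool (running B p om t) :: ennreal) \<in> borel_measurable (PiM UNIV (\<lambda>_. Cm \<Otimes>\<^sub>M (Hm \<Otimes>\<^sub>M Um)))"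
    using running_measurable[OF p] unfolding \<Omega>_eq by measurable
  show "(\<lambda>om. choice p om t) \<in> measurable (PiM UNIV (\<lambda>_. Cm \<Otimes>\<^sub>M (Hm \<Otimes>\<^sub>M Um))) (count_space UNIV)"
    using valid_policy_choice_measurable[OF p] unfolding \<Omega>_eq .
  \<comment> \<open>the policy decides to continue before round t and picks its search from the past and the current seed only\<close>
  show "of_bool (running B p (om(t := (C, h, u))) t) = (of_bool (running B p (om(t := (C', h', u))) t) :: ennreal)"
    for om C h C' h' u
  proof -
    have "running B p (om(t := (C, h, u))) t = running B p (om(t := (C', h', u))) t"
      by (rule within_budget_round_cost_cong) simp
    then show ?thesis by simp
  qed
  show "choice p (om(t := (C, h, u))) t = choice p (om(t := (C', h', u))) t" for om C h C' h' u
    by (rule choice_cong) auto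
qed

lemma expected_running_reward:
  assumes p: "valid_policy n E \<Omega> p"
  shows "(\<integral>\<^sup>+om. of_bool (running B p om t) * ennreal (round_reward p om t) \<partial>\<Omega>)
       = (\<integral>\<^sup>+om. of_bool (running B p om t) * ennreal (find_prob (choice p om t) w) \<partial>\<Omega>)"
proof -
  have "(\<lambda>x. ennreal (search_round_reward s (snd x))) \<in> borel_measurable (Cm \<Otimes>\<^sub>M Hm)" for s
    by measurable
  from nn_integral_running_round[OF p this, of B t]
  have "(\<integral>\<^sup>+om. of_bool (running B p om t) * ennreal (round_reward p om t) \<partial>\<Omega>)
      = (\<integral>\<^sup>+om. of_bool (running B p om t)
          * (\<integral>\<^sup>+x. ennreal (search_round_reward (choice p om t) (snd x)) \<partial>(Cm \<Otimes>\<^sub>M Hm)) \<partial>\<Omega>)"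
    by (simp add: round_reward_eq)
  also have "\<dots> = (\<integral>\<^sup>+om. of_bool (running B p om t) * ennreal (find_prob (choice p om t) w) \<partial>\<Omega>)"
  proof (rule nn_integral_cong)
    fix om assume "om \<in> space \<Omega>"
    then have s: "choice p om t \<in> searches n E" using p by (simp add: valid_policy_def)
    show "of_bool (running B p om t)
        * (\<integral>\<^sup>+x. ennreal (search_round_reward (choice p om t) (snd x)) \<partial>(Cm \<Otimes>\<^sub>M Hm))
      = of_bool (running B p om t) * ennreal (find_prob (choice p om t) w)"
      by (simp only: nn_integral_search_round_reward[OF s])
  qed
  finally show ?thesis .
qed

lemma expected_running_cost:
  assumes p: "valid_policy n E \<Omega> p"
  shows "(\<integral>\<^sup>+om. of_bool (running B p om t) * ennreal (round_cost p om t) \<partial>\<Omega>)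
       = (\<integral>\<^sup>+om. of_bool (running B p om t) * ennreal (search_cost (choice p om t) w c) \<partial>\<Omega>)"
proof -
  have "(\<lambda>x. ennreal (search_round_cost s (fst x) (snd x))) \<in> borel_measurable (Cm \<Otimes>\<^sub>M Hm)" for s
    by measurable
  from nn_integral_running_round[OF p this, of B t]
  have "(\<integral>\<^sup>+om. of_bool (running B p om t) * ennreal (round_cost p om t) \<partial>\<Omega>)
      = (\<integral>\<^sup>+om. of_bool (running B p om t)
          * (\<integral>\<^sup>+x. ennreal (search_round_cost (choice p om t) (fst x) (snd x)) \<partial>(Cm \<Otimes>\<^sub>M Hm)) \<partial>\<Omega>)"
    by (simp add: round_cost_eq)
  also have "\<dots> = (\<integral>\<^sup>+om. of_bool (running B p om t) * ennreal (search_cost (choice p om t) w c) \<partial>\<Omega>)"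
  proof (rule nn_integral_cong)
    fix om assume "om \<in> space \<Omega>"
    then have s: "choice p om t \<in> searches n E" using p by (simp add: valid_policy_def)
    show "of_bool (running B p om t)
        * (\<integral>\<^sup>+x. ennreal (search_round_cost (choice p om t) (fst x) (snd x)) \<partial>(Cm \<Otimes>\<^sub>M Hm))
      = of_bool (running B p om t) * ennreal (search_cost (choice p om t) w c)"
      by (simp only: nn_integral_search_round_cost[OF s])
  qed
  finally show ?thesis .
qed

lemma AE_\<Omega>_unit_interval: "AE om in \<Omega>. \<forall>t. \<forall>i\<in>{1..n}. 0 \<le> fst (om t) i \<and> fst (om t) i \<le> 1"
proof -
  interpret HU: prob_space "Hm \<Otimes>\<^sub>M Um" by (intro prob_space_pair prob_space_measure_pmf prob_space_Um)
  have "AE x in distr (Cm \<Otimes>\<^sub>M (Hm \<Otimes>\<^sub>M Um)) Cm fst. \<forall>i\<in>{1..n}. 0 \<le> x i \<and> x i \<le> 1"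
    unfolding HU.distr_pair_fst by (rule AE_Cm_unit_interval)
  then have round: "AE x in Cm \<Otimes>\<^sub>M (Hm \<Otimes>\<^sub>M Um). \<forall>i\<in>{1..n}. 0 \<le> fst x i \<and> fst x i \<le> 1"
    by (rule AE_distrD[OF measurable_fst])
  have "AE om in \<Omega>. \<forall>i\<in>{1..n}. 0 \<le> fst (om t) i \<and> fst (om t) i \<le> 1" for t
    unfolding \<Omega>_eq
    by (rule AE_PiM_component[where M="\<lambda>_. Cm \<Otimes>\<^sub>M (Hm \<Otimes>\<^sub>M Um)" and i=t, OF _ UNIV_I round])
       (rule prob_space_round)
  then show ?thesis by (simp add: AE_all_countable)
qed

lemma AE_round_cost_bounds:
  assumes "valid_policy n E \<Omega> p"
  shows "AE om in \<Omega>. \<forall>t. 0 \<le> round_cost p om t \<and> round_cost p om t \<le> real n"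
  using AE_\<Omega>_unit_interval AE_space
proof eventually_elim
  case (elim om)
  show ?case
  proof
    fix t
    have "choice p om t \<in> searches n E" using assms elim(2) by (simp add: valid_policy_def)
    then show "0 \<le> round_cost p om t \<and> round_cost p om t \<le> real n"
      unfolding round_cost_eq using elim(1) by (intro search_round_cost_bounds) blast+
  qed
qed

section \<open>Bounds on the expected reward\<close>

definition running_total :: "real \<Rightarrow> policy \<Rightarrow> ((nat \<Rightarrow> round) \<Rightarrow> nat \<Rightarrow> real) \<Rightarrow> ennreal" where
  "running_total B p f = (\<integral>\<^sup>+om. (\<Sum>t. of_bool (running B p om t) * ennreal (f om t)) \<partial>\<Omega>)"

definition expected_rounds :: "real \<Rightarrow> policy \<Rightarrow> ennreal" where
  "expected_rounds B p = (\<Sum>t. \<integral>\<^sup>+om. of_bool (running B p om t) \<partial>\<Omega>)"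

lemma running_total_eq_suminf:
  assumes p: "valid_policy n E \<Omega> p" and f[measurable]: "\<And>t. (\<lambda>om. f om t) \<in> borel_measurable \<Omega>"
  shows "running_total B p f = (\<Sum>t. \<integral>\<^sup>+om. of_bool (running B p om t) * ennreal (f om t) \<partial>\<Omega>)"
  unfolding running_total_def
  using running_measurable[OF p] measurable_compose[OF f measurable_ennreal]
  by (intro nn_integral_suminf) measurable

lemma reward_expected_le_running_total: "reward_expected \<Omega> B p \<le> running_total B p (round_reward p)"
  unfolding reward_expected_def running_total_def stop_time_gt_iff
  by (intro nn_integral_mono suminf_le summableI) (auto simp: within_budget_Suc)

lemma running_total_reward_le:
  assumes p: "valid_policy n E \<Omega> p"
  shows "running_total B p (round_reward p) \<le> reward_expected \<Omega> B p + 1"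
proof -
  note [measurable] = running_measurable[OF p] round_reward_measurable[OF p]
  \<comment> \<open>the rewards collected but not counted are those of the single round that exhausts the budget\<close>
  have "(\<Sum>t. of_bool (running B p om t) * ennreal (round_reward p om t))
      \<le> (\<Sum>t. of_bool (running B p om (Suc t)) * ennreal (round_reward p om t)) + 1" for om
    unfolding within_budget_def less_Suc_eq_le
    by (rule suminf_of_bool_all_less_le) (simp add: round_reward_eq search_round_reward_eq)
  then have "running_total B p (round_reward p)
      \<le> (\<integral>\<^sup>+om. (\<Sum>t. of_bool (running B p om (Suc t)) * ennreal (round_reward p om t)) + 1 \<partial>\<Omega>)"
    unfolding running_total_def by (rule nn_integral_mono)
  also have "\<dots> = reward_expected \<Omega> B p + 1"
  proof -
    have "(\<lambda>om. \<Sum>t. of_bool (running B p om (Suc t)) * ennreal (round_reward p om t)) \<in> borel_measurable \<Omega>"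
      by measurable
    moreover have "(\<integral>\<^sup>+om. (\<Sum>t. of_bool (running B p om (Suc t)) * ennreal (round_reward p om t)) \<partial>\<Omega>)
        = reward_expected \<Omega> B p"
      unfolding reward_expected_def stop_time_gt_iff by (intro nn_integral_cong suminf_cong) simp
    ultimately show ?thesis
      using nn_integral_add[of _ \<Omega> "\<lambda>_. 1"] by (simp add: prob_space.emeasure_space_1[OF prob_space_\<Omega>])
  qed
  finally show ?thesis .
qed

lemma running_total_cost_le:
  assumes p: "valid_policy n E \<Omega> p" and "0 \<le> B"
  shows "running_total B p (round_cost p) \<le> ennreal (B + real n)"
proof -
  have "AE om in \<Omega>. (\<Sum>t. of_bool (running B p om t) * ennreal (round_cost p om t)) \<le> ennreal (B + real n)"
    using AE_round_cost_bounds[OF p]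
    by eventually_elim (rule suminf_within_budget_le[OF _ \<open>0 \<le> B\<close>], blast)
  then have "running_total B p (round_cost p) \<le> (\<integral>\<^sup>+om. ennreal (B + real n) \<partial>\<Omega>)"
    unfolding running_total_def by (rule nn_integral_mono_AE)
  then show ?thesis by (simp add: prob_space.emeasure_space_1[OF prob_space_\<Omega>])
qed

lemma expected_rounds_top_or_budget_le:
  assumes p: "valid_policy n E \<Omega> p"
  shows "expected_rounds B p = \<top> \<or> ennreal B \<le> running_total B p (round_cost p)"
proof -
  note [measurable] = running_measurable[OF p]
  define Z where "Z = {om \<in> space \<Omega>. \<forall>t. running B p om t}"
  have Z[measurable]: "Z \<in> sets \<Omega>" unfolding Z_def by measurable
  show ?thesis
  proof (cases "emeasure \<Omega> Z = 0")
    case True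
    \<comment> \<open>almost surely the budget is exhausted, and up to then the whole budget has been paid\<close>
    then have "AE om in \<Omega>. \<not> (\<forall>t. running B p om t)"
      using Z by (intro AE_I'[of Z]) (auto simp: Z_def null_sets_def)
    then have "AE om in \<Omega>. ennreal B \<le> (\<Sum>t. of_bool (running B p om t) * ennreal (round_cost p om t))"
      using AE_round_cost_bounds[OF p] by eventually_elim (auto intro: le_suminf_within_budget)
    then have "(\<integral>\<^sup>+om. ennreal B \<partial>\<Omega>) \<le> running_total B p (round_cost p)"
      unfolding running_total_def by (rule nn_integral_mono_AE)
    then show ?thesis by (simp add: prob_space.emeasure_space_1[OF prob_space_\<Omega>])
  next
    case False
    \<comment> \<open>with positive probability the budget is never exhausted, and then every round is played\<close>
    have "emeasure \<Omega> Z \<le> (\<integral>\<^sup>+om. of_bool (running B p om t) \<partial>\<Omega>)" for t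
    proof -
      have "emeasure \<Omega> Z = (\<integral>\<^sup>+om. indicator Z om \<partial>\<Omega>)" using Z by simp
      also have "\<dots> \<le> (\<integral>\<^sup>+om. of_bool (running B p om t) \<partial>\<Omega>)"
        by (intro nn_integral_mono) (simp add: Z_def indicator_def)
      finally show ?thesis .
    qed
    then have "(\<Sum>t::nat. emeasure \<Omega> Z) \<le> expected_rounds B p"
      unfolding expected_rounds_def by (intro suminf_le summableI)
    moreover have "(\<Sum>t::nat. emeasure \<Omega> Z) = emeasure \<Omega> Z * (\<Sum>t::nat. ennreal 1)"
      using ennreal_suminf_cmult[of "emeasure \<Omega> Z" "\<lambda>_. 1"] by simp
    moreover have "(\<Sum>t::nat. ennreal 1) = \<top>"
      by (rule summable_iff_suminf_neq_top) (simp_all add: summable_const_iff)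
    ultimately show ?thesis using False by (simp add: ennreal_mult_top top_unique)
  qed
qed

lemma running_total_reward_le_cost:
  assumes p: "valid_policy n E \<Omega> p"
  shows "running_total B p (round_reward p) \<le> ennreal (1 / J) * running_total B p (round_cost p)"
proof -
  have [measurable]: "(\<lambda>om. search_cost (choice p om t) w c) \<in> borel_measurable \<Omega>" for t
    by (rule measurable_compose_countable[OF _ valid_policy_choice_measurable[OF p]]) simp
  note [measurable] = running_measurable[OF p]
  have "running_total B p (round_reward p)
      = (\<Sum>t. \<integral>\<^sup>+om. of_bool (running B p om t) * ennreal (find_prob (choice p om t) w) \<partial>\<Omega>)"
    by (simp add: running_total_eq_suminf[OF p round_reward_measurable[OF p]] expected_running_reward[OF p])
  also have "\<dots> \<le> (\<Sum>t. \<integral>\<^sup>+om. ennreal (1 / J) * (of_bool (running B p om t)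
      * ennreal (search_cost (choice p om t) w c)) \<partial>\<Omega>)"
  proof (intro suminf_le summableI nn_integral_mono)
    fix t om assume "om \<in> space \<Omega>"
    then have s: "choice p om t \<in> searches n E" using p by (simp add: valid_policy_def)
    have "find_prob (choice p om t) w \<le> 1 / J * search_cost (choice p om t) w c"
      using J_mult_find_prob_le[OF s] J_pos by (simp add: field_simps)
    then have "ennreal (find_prob (choice p om t) w) \<le> ennreal (1 / J) * ennreal (search_cost (choice p om t) w c)"
      using J_pos search_cost_nonneg[OF s] by (simp add: ennreal_mult[symmetric] ennreal_leI)
    then show "of_bool (running B p om t) * ennreal (find_prob (choice p om t) w)
        \<le> ennreal (1 / J) * (of_bool (running B p om t) * ennreal (search_cost (choice p om t) w c))"
      by simp
  qed
  also have "\<dots> = ennreal (1 / J) * running_total B p (round_cost p)"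
    by (subst nn_integral_cmult) (measurable, simp add: running_total_eq_suminf[OF p
          round_cost_measurable[OF p]] expected_running_cost[OF p])
  finally show ?thesis .
qed

lemma reward_expected_le:
  assumes p: "valid_policy n E \<Omega> p" and "0 \<le> B"
  shows "reward_expected \<Omega> B p \<le> ennreal ((B + real n) / J)"
proof -
  have "reward_expected \<Omega> B p \<le> ennreal (1 / J) * running_total B p (round_cost p)"
    using reward_expected_le_running_total running_total_reward_le_cost[OF p] by (rule order_trans)
  also have "\<dots> \<le> ennreal (1 / J) * ennreal (B + real n)"
    using running_total_cost_le[OF p \<open>0 \<le> B\<close>] by (rule mult_left_mono) simp
  also have "\<dots> = ennreal ((B + real n) / J)"
    using J_pos \<open>0 \<le> B\<close> by (simp add: ennreal_mult[symmetric] del: ennreal_plus)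
  finally show ?thesis .
qed

lemma valid_policy_stationary: "s \<in> searches n E \<Longrightarrow> valid_policy n E \<Omega> (\<lambda>_ _. s)"
  by (simp add: valid_policy_def choice_def)

text \<open>Wald's identity for a stationary policy: every round played has the same expected reward and cost.\<close>

lemma running_total_stationary:
  assumes s: "s \<in> searches n E"
  shows "running_total B (\<lambda>_ _. s) (round_reward (\<lambda>_ _. s)) = expected_rounds B (\<lambda>_ _. s) * ennreal (find_prob s w)"
    and "running_total B (\<lambda>_ _. s) (round_cost (\<lambda>_ _. s)) = expected_rounds B (\<lambda>_ _. s) * ennreal (search_cost s w c)"
proof -
  note p = valid_policy_stationary[OF s]
  have "(\<lambda>om. of_bool (running B (\<lambda>_ _. s) om t) :: ennreal) \<in> borel_measurable \<Omega>" for t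
    using running_measurable[OF p] by measurable
  then show "running_total B (\<lambda>_ _. s) (round_reward (\<lambda>_ _. s)) = expected_rounds B (\<lambda>_ _. s) * ennreal (find_prob s w)"
    "running_total B (\<lambda>_ _. s) (round_cost (\<lambda>_ _. s)) = expected_rounds B (\<lambda>_ _. s) * ennreal (search_cost s w c)"
    by (simp_all add: running_total_eq_suminf[OF p] round_reward_measurable[OF p] round_cost_measurable[OF p]
        expected_running_reward[OF p] expected_running_cost[OF p] nn_integral_multc expected_rounds_def choice_def)
qed

lemma reward_expected_stationary_ge:
  assumes s: "s \<in> searches n E" and opt: "Jfun s w c = Jstar n E w c"
  shows "ereal ((B - real n) / J) \<le> enn2ereal (reward_expected \<Omega> B (\<lambda>_ _. s))"
proof -
  define p :: policy where "p = (\<lambda>_ _. s)"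
  note p = valid_policy_stationary[OF s, folded p_def]
  define S where "S = expected_rounds B p"
  define D where "D = find_prob s w"
  have D: "0 < D" "search_cost s w c = J * D"
    using optimal_search[OF s opt] by (simp_all add: D_def)
  have SD: "S * ennreal D \<le> reward_expected \<Omega> B p + 1"
    using running_total_reward_le[OF p, of B] running_total_stationary(1)[OF s, of B]
    by (simp add: S_def D_def p_def)
  have SJD: "S = \<top> \<or> ennreal B \<le> S * ennreal (J * D)"
    using expected_rounds_top_or_budget_le[OF p, of B] running_total_stationary(2)[OF s, of B]
    by (simp add: S_def D(2) p_def)
  show ?thesis
  proof (cases "reward_expected \<Omega> B p")
    case (real f)
    have "S \<noteq> \<top>"
      using SD real D(1) by (auto simp: ennreal_mult_top top_unique)
    then obtain \<sigma> where \<sigma>: "S = ennreal \<sigma>" "0 \<le> \<sigma>" by (cases S) auto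
    have "ennreal (\<sigma> * D) \<le> ennreal (f + 1)"
      using SD real \<sigma> D(1) by (simp add: ennreal_mult[symmetric])
    then have reward: "\<sigma> * D \<le> f + 1"
      using ennreal_le_iff[of "f + 1" "\<sigma> * D"] real by simp
    have "ennreal B \<le> ennreal (\<sigma> * (J * D))"
      using SJD \<sigma> \<open>S \<noteq> \<top>\<close> J_pos D(1) by (simp add: ennreal_mult[symmetric])
    then have "B \<le> \<sigma> * (J * D)"
      using \<sigma>(2) J_pos D(1) by (simp add: ennreal_le_iff)
    then have cost: "B / J \<le> \<sigma> * D"
      using J_pos by (simp add: field_simps)
    have "1 \<le> real n / J"
      using J_pos J_le_n by simp
    with reward cost have "(B - real n) / J \<le> f"
      by (simp add: diff_divide_distrib)
    then show ?thesis using real by (simp add: p_def)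
  qed (simp add: p_def)
qed

end

theorem proposition1:
  fixes n :: nat and E :: "(nat \<times> nat) set"
    and wstar cstar :: "nat \<Rightarrow> real" and \<mu> :: "nat \<Rightarrow> real measure" and H :: "nat pmf"
    and B :: real and sstar :: "nat list"
  assumes "E \<subseteq> {1..n} \<times> {1..n}" and "acyclic E"
    and "\<forall>i\<in>{1..n}. 0 \<le> wstar i \<and> wstar i \<le> 1" and "(\<Sum>i\<in>{1..n}. wstar i) = 1"
    and "\<forall>i\<in>{1..n}. pmf H i = wstar i"
    and "\<forall>i\<in>{1..n}. prob_space (\<mu> i) \<and> sets (\<mu> i) = sets borel \<and>
           emeasure (\<mu> i) {0..1} = 1 \<and> (\<integral>x. x \<partial>(\<mu> i)) = cstar i"
    and "\<forall>i\<in>{1..n}. 0 < cstar i \<and> cstar i \<le> 1"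
    and "sstar \<in> searches n E" and "Jfun sstar wstar cstar = Jstar n E wstar cstar"
    and "B > 0"
  shows "ereal ((B - real n) / real_of_ereal (Jstar n E wstar cstar))
           \<le> enn2ereal (reward_expected (omega_measure n \<mu> H) B (\<lambda>_ _. sstar))
       \<and> reward_expected (omega_measure n \<mu> H) B (\<lambda>_ _. sstar)
           \<le> opt_reward n E (omega_measure n \<mu> H) B
       \<and> enn2ereal (opt_reward n E (omega_measure n \<mu> H) B)
           \<le> ereal ((B + real n) / real_of_ereal (Jstar n E wstar cstar))"
proof -
  interpret search_and_stop n E wstar cstar \<mu> H
    using assms(1-7)
    by (intro search_and_stop.intro search_instance.intro search_and_stop_axioms.intro) simp_all
  have lower: "ereal ((B - real n) / J) \<le> enn2ereal (reward_expected \<Omega> B (\<lambda>_ _. sstar))"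
    using reward_expected_stationary_ge[OF assms(8,9)] .
  have middle: "reward_expected \<Omega> B (\<lambda>_ _. sstar) \<le> opt_reward n E \<Omega> B"
    unfolding opt_reward_def using valid_policy_stationary[OF assms(8)] by (intro SUP_upper) simp
  have "opt_reward n E \<Omega> B \<le> ennreal ((B + real n) / J)"
    unfolding opt_reward_def using assms(10) by (intro SUP_least reward_expected_le) simp_all
  then have upper: "enn2ereal (opt_reward n E \<Omega> B) \<le> ereal ((B + real n) / J)"
    using J_pos assms(10) by (simp add: less_eq_ennreal.rep_eq)
  show ?thesis
    using lower middle upper by (simp add: J_def)
qed

end
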